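(* Assume $\inf_{x\in X}\mu(B_x(1/2))>0$. Let $T\in\mathscr{B}(X)$ be a controlled operator and $\xi$ a filter on $X$ finer than the Fréchet filter. Then $\inf_{F\in\mathrm{co}(\xi)}\|\mathbf{1}_FT\|=0$ (infimum over measurable $F\in\mathrm{co}(\xi)$) if and only if $\lim_{x\to\xi}\|\mathbf{1}_{B_x(r)}T\|=0$ for all $r>0$.
   Context: Let $(X,d)$ be a non-compact proper metric space (closed balls $B_x(r)=\{y:d(x,y)\le r\}$ compact) and $\mu$ a Radon measure with support $X$, with $\mu(B_x(r))>0$ and $\sup_x\mu(B_x(r))<\infty$ for all $r>0$. $\mathscr{B}(X)$ = bounded operators on $L^2(X,\mu)$; $\mathbf{1}_A$ is multiplication by the characteristic function of measurable $A$. $T\in\mathscr{B}(X)$ is controlled if there is $r>0$ such that $\mathbf{1}_FT\mathbf{1}_G=0$ for all closed $F,G\subset X$ with $d(F,G)>r$. Fréchet filter = sets with relatively compact complement. $\lim_{x\to\xi}f(x)=0$ means $\{x:|f(x)|<\varepsilon\}\in\xi$ for all $\varepsilon>0$. $F^{(r)}=\{x:\inf_{y\notin F}d(x,y)>r\}$ and $\mathrm{co}(\xi)=\{F\subset X:F^{(r)}\in\xi\ \forall r>0\}$. *)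

theory Defs
  imports "HOL-Analysis.Analysis"
begin

definition L2 :: "'a measure \<Rightarrow> ('a \<Rightarrow> complex) set" where
  "L2 M = {f. f \<in> borel_measurable M \<and> integrable M (\<lambda>x. (cmod (f x))^2)}"

definition L2norm :: "'a measure \<Rightarrow> ('a \<Rightarrow> complex) \<Rightarrow> real" where
  "L2norm M f = sqrt (integral\<^sup>L M (\<lambda>x. (cmod (f x))^2))"

text \<open>Bounded operators on L^2(M), represented by maps on representatives
  which preserve L^2, respect a.e. equality, are linear a.e. and bounded.\<close>
definition bounded_op :: "'a measure \<Rightarrow> (('a \<Rightarrow> complex) \<Rightarrow> ('a \<Rightarrow> complex)) \<Rightarrow> bool" where
  "bounded_op M T \<longleftrightarrow>
     (\<forall>f\<in>L2 M. T f \<in> L2 M) \<and>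
     (\<forall>f\<in>L2 M. \<forall>g\<in>L2 M. (AE x in M. f x = g x) \<longrightarrow> (AE x in M. T f x = T g x)) \<and>
     (\<forall>f\<in>L2 M. \<forall>g\<in>L2 M. \<forall>c. AE x in M. T (\<lambda>y. c * f y + g y) x = c * T f x + T g x) \<and>
     (\<exists>C. \<forall>f\<in>L2 M. L2norm M (T f) \<le> C * L2norm M f)"

definition opnorm :: "'a measure \<Rightarrow> (('a \<Rightarrow> complex) \<Rightarrow> ('a \<Rightarrow> complex)) \<Rightarrow> real" where
  "opnorm M S = (SUP f \<in> {f \<in> L2 M. L2norm M f \<le> 1}. L2norm M (S f))"

definition mult_ind :: "'a set \<Rightarrow> (('a \<Rightarrow> complex) \<Rightarrow> ('a \<Rightarrow> complex)) \<Rightarrow> (('a \<Rightarrow> complex) \<Rightarrow> ('a \<Rightarrow> complex))" where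
  "mult_ind A S = (\<lambda>f x. indicator A x * S f x)"

text \<open>d(F,G) > r, where d(F,G) = inf of distances (= +infinity if F or G is empty).\<close>
definition setdist_gt_inf :: "real \<Rightarrow> 'a::metric_space set \<Rightarrow> 'a set \<Rightarrow> bool" where
  "setdist_gt_inf r F G \<longleftrightarrow> (\<exists>s>r. \<forall>x\<in>F. \<forall>y\<in>G. dist x y \<ge> s)"

definition controlled :: "'a::metric_space measure \<Rightarrow> (('a \<Rightarrow> complex) \<Rightarrow> ('a \<Rightarrow> complex)) \<Rightarrow> bool" where
  "controlled M T \<longleftrightarrow> (\<exists>r>0. \<forall>F G. closed F \<longrightarrow> closed G \<longrightarrow> setdist_gt_inf r F G \<longrightarrow>
      (\<forall>f\<in>L2 M. AE x in M. indicator F x * T (\<lambda>y. indicator G y * f y) x = 0))"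

definition frechet_sets :: "'a::metric_space set set" where
  "frechet_sets = {A. compact (closure (- A))}"

text \<open>F^(r) = {x. inf_{y notin F} d(x,y) > r} (inf over empty set = +infinity).\<close>
definition inner_nbhd :: "'a::metric_space set \<Rightarrow> real \<Rightarrow> 'a set" where
  "inner_nbhd F r = {x. \<exists>s>r. \<forall>y. y \<notin> F \<longrightarrow> dist x y \<ge> s}"

definition co :: "'a::metric_space filter \<Rightarrow> 'a set set" where
  "co \<xi> = {F. \<forall>r>0. eventually (\<lambda>x. x \<in> inner_nbhd F r) \<xi>}"

end

theory Submission
  imports Defs
begin

text \<open>
  If \<open>\<one>\<^sub>F T\<close> is small for some \<open>F \<in> co \<xi>\<close>, then \<open>F\<close> eventually contains every ball
  \<open>B\<^sub>x(r)\<close>, so \<open>\<one>\<^bsub>B\<^sub>x(r)\<^esub> T\<close> is eventually small. Conversely, let \<open>A\<close> be the set of centres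
  \<open>x\<close> with \<open>\<parallel>\<one>\<^bsub>B\<^sub>x(2)\<^esub> T\<parallel> < \<delta>\<close> and \<open>F\<close> its open \<open>1\<close>-neighbourhood; the hypothesis on balls
  gives \<open>F \<in> co \<xi>\<close>. A maximal \<open>1\<close>-separated set \<open>S \<subseteq> A\<close> covers \<open>F\<close> by the balls \<open>B\<^sub>s(2)\<close>,
  and the uniform lower bound on the measure of half-balls bounds the number \<open>N\<close> of points
  of \<open>S\<close> in any ball of radius \<open>r + 3\<close>, where \<open>r\<close> is the propagation of \<open>T\<close>. Since
  \<open>\<one>\<^bsub>B\<^sub>s(2)\<^esub> T f\<close> only depends on \<open>f\<close> on \<open>B\<^sub>s(r + 3)\<close>, summing the squared norms over \<open>s\<close>,
  with every point counted at most \<open>N\<close> times, gives \<open>\<parallel>\<one>\<^sub>F T\<parallel> \<le> \<surd>N \<delta>\<close>; and \<open>\<delta>\<close> is arbitrary.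
\<close>

lemma L2norm_nonneg: "L2norm M f \<ge> 0"
  unfolding L2norm_def by (simp add: integral_nonneg_AE)

lemma L2norm_power2: "(L2norm M f)^2 = integral\<^sup>L M (\<lambda>x. (cmod (f x))^2)"
  unfolding L2norm_def by (simp add: integral_nonneg_AE)

lemma L2_measurable: "f \<in> L2 M \<Longrightarrow> f \<in> borel_measurable M"
  by (simp add: L2_def)

lemma L2_integrable: "f \<in> L2 M \<Longrightarrow> integrable M (\<lambda>x. (cmod (f x))^2)"
  by (simp add: L2_def)

lemma L2_dominated:
  assumes "g \<in> borel_measurable M" "f \<in> L2 M" "\<And>x. cmod (g x) \<le> cmod (f x)"
  shows "g \<in> L2 M" "L2norm M g \<le> L2norm M f"
proof -
  have g_int: "integrable M (\<lambda>x. (cmod (g x))^2)"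
    by (rule Bochner_Integration.integrable_bound[OF L2_integrable[OF assms(2)]])
      (use assms in \<open>auto intro!: power_mono\<close>)
  then show "g \<in> L2 M" using assms(1) by (simp add: L2_def)
  have "integral\<^sup>L M (\<lambda>x. (cmod (g x))^2) \<le> integral\<^sup>L M (\<lambda>x. (cmod (f x))^2)"
    by (rule integral_mono[OF g_int L2_integrable[OF assms(2)]])
      (use assms(3) in \<open>auto intro!: power_mono\<close>)
  then show "L2norm M g \<le> L2norm M f" unfolding L2norm_def by simp
qed

lemma L2_zero: "(\<lambda>x. 0) \<in> L2 M" "L2norm M (\<lambda>x. 0) = 0"
  by (auto simp: L2_def L2norm_def)

lemma L2_scale:
  assumes "f \<in> L2 M"
  shows "(\<lambda>x. c * f x) \<in> L2 M" "L2norm M (\<lambda>x. c * f x) = cmod c * L2norm M f"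
proof -
  have sq: "(\<lambda>x. (cmod (c * f x))^2) = (\<lambda>x. (cmod c)^2 * (cmod (f x))^2)"
    by (simp add: norm_mult power_mult_distrib)
  then show "(\<lambda>x. c * f x) \<in> L2 M"
    using assms L2_integrable[OF assms] L2_measurable[OF assms] by (auto simp: L2_def)
  show "L2norm M (\<lambda>x. c * f x) = cmod c * L2norm M f"
    unfolding L2norm_def sq by (simp add: real_sqrt_mult)
qed

lemma L2norm_cong_AE:
  assumes "f \<in> borel_measurable M" "g \<in> borel_measurable M" "AE x in M. f x = g x"
  shows "L2norm M f = L2norm M g"
  unfolding L2norm_def by (rule arg_cong[where f=sqrt], rule integral_cong_AE) (use assms in auto)

lemma L2norm_eq_0_AE:
  assumes "f \<in> L2 M" "L2norm M f = 0"
  shows "AE x in M. f x = 0"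
proof -
  have "integral\<^sup>L M (\<lambda>x. (cmod (f x))^2) = 0" using assms(2) L2norm_power2[of M f] by simp
  then have "AE x in M. (cmod (f x))^2 = 0"
    using integral_nonneg_eq_0_iff_AE[OF L2_integrable[OF assms(1)]] by simp
  then show ?thesis by auto
qed

lemma L2_mult_indicator:
  assumes "f \<in> L2 M" "A \<in> sets M"
  shows "(\<lambda>x. indicator A x * f x) \<in> L2 M" "L2norm M (\<lambda>x. indicator A x * f x) \<le> L2norm M f"
proof -
  have "(\<lambda>x. indicator A x * f x) \<in> borel_measurable M"
    using L2_measurable[OF assms(1)] assms(2) by measurable
  then show "(\<lambda>x. indicator A x * f x) \<in> L2 M" "L2norm M (\<lambda>x. indicator A x * f x) \<le> L2norm M f"
    using L2_dominated[OF _ assms(1)] by (auto simp: indicator_def)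
qed

lemma L2norm_mult_indicator_power2:
  "(L2norm M (\<lambda>x. indicator A x * f x))^2 = integral\<^sup>L M (\<lambda>x. indicator A x * (cmod (f x))^2)"
  unfolding L2norm_power2 by (rule arg_cong[where f="integral\<^sup>L M"]) (auto simp: indicator_def)

lemma bounded_op_L2: "bounded_op M S \<Longrightarrow> f \<in> L2 M \<Longrightarrow> S f \<in> L2 M"
  by (simp add: bounded_op_def)

lemma bounded_op_cong_AE:
  assumes "bounded_op M S" "f \<in> L2 M" "g \<in> L2 M" "AE x in M. f x = g x"
  shows "AE x in M. S f x = S g x"
  using assms(1)[unfolded bounded_op_def, THEN conjunct2, THEN conjunct1] assms(2-4) by blast

lemma bounded_op_linear_AE:
  assumes "bounded_op M S" "f \<in> L2 M" "g \<in> L2 M"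
  shows "AE x in M. S (\<lambda>y. c * f y + g y) x = c * S f x + S g x"
  using assms(1)[unfolded bounded_op_def, THEN conjunct2, THEN conjunct2, THEN conjunct1] assms(2,3)
  by blast

lemma bounded_op_bound: "bounded_op M S \<Longrightarrow> \<exists>C. \<forall>f\<in>L2 M. L2norm M (S f) \<le> C * L2norm M f"
  unfolding bounded_op_def by (elim conjE)

lemma bounded_op_zero_AE:
  assumes "bounded_op M S"
  shows "AE x in M. S (\<lambda>y. 0) x = 0"
  using bounded_op_linear_AE[OF assms L2_zero(1) L2_zero(1), of "-1"] by simp

lemma bounded_op_scale_AE:
  assumes "bounded_op M S" "f \<in> L2 M"
  shows "AE x in M. S (\<lambda>y. c * f y) x = c * S f x"
  using bounded_op_linear_AE[OF assms L2_zero(1), of c] bounded_op_zero_AE[OF assms(1)]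
  by eventually_elim simp

lemma bounded_op_bdd_above:
  assumes "bounded_op M S"
  shows "bdd_above ((\<lambda>f. L2norm M (S f)) ` {f \<in> L2 M. L2norm M f \<le> 1})"
proof -
  obtain C where C: "\<forall>f\<in>L2 M. L2norm M (S f) \<le> C * L2norm M f"
    using bounded_op_bound[OF assms] by blast
  show ?thesis
  proof (rule bdd_aboveI2)
    fix f assume f: "f \<in> {f \<in> L2 M. L2norm M f \<le> 1}"
    have "C * L2norm M f \<le> \<bar>C\<bar> * L2norm M f"
      using L2norm_nonneg[of M f] by (simp add: mult_right_mono)
    also have "\<dots> \<le> \<bar>C\<bar>" using f by (simp add: mult_left_le)
    finally show "L2norm M (S f) \<le> \<bar>C\<bar>" using C f by force
  qed
qed

lemma bounded_op_mult_ind: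
  assumes T: "bounded_op M T" and A: "A \<in> sets M"
  shows "bounded_op M (mult_ind A T)"
  unfolding bounded_op_def
proof (intro conjI ballI allI impI)
  fix f assume "f \<in> L2 M"
  then show "mult_ind A T f \<in> L2 M"
    unfolding mult_ind_def by (rule L2_mult_indicator(1)[OF bounded_op_L2[OF T] A])
next
  fix f g assume "f \<in> L2 M" "g \<in> L2 M" "AE x in M. f x = g x"
  then have "AE x in M. T f x = T g x" by (rule bounded_op_cong_AE[OF T])
  then show "AE x in M. mult_ind A T f x = mult_ind A T g x" unfolding mult_ind_def by auto
next
  fix f g c assume "f \<in> L2 M" "g \<in> L2 M"
  from bounded_op_linear_AE[OF T this, where c=c]
  show "AE x in M. mult_ind A T (\<lambda>y. c * f y + g y) x = c * mult_ind A T f x + mult_ind A T g x"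
    unfolding mult_ind_def by eventually_elim (simp add: algebra_simps)
next
  obtain C where C: "\<forall>f\<in>L2 M. L2norm M (T f) \<le> C * L2norm M f"
    using bounded_op_bound[OF T] by blast
  have "L2norm M (mult_ind A T f) \<le> C * L2norm M f" if f: "f \<in> L2 M" for f
    using L2_mult_indicator(2)[OF bounded_op_L2[OF T f] A] C f unfolding mult_ind_def by force
  then show "\<exists>C. \<forall>f\<in>L2 M. L2norm M (mult_ind A T f) \<le> C * L2norm M f" by blast
qed

lemma opnorm_upper:
  "bounded_op M S \<Longrightarrow> f \<in> L2 M \<Longrightarrow> L2norm M f \<le> 1 \<Longrightarrow> L2norm M (S f) \<le> opnorm M S"
  unfolding opnorm_def by (rule cSUP_upper[OF _ bounded_op_bdd_above]) auto

lemma opnorm_nonneg: "bounded_op M S \<Longrightarrow> opnorm M S \<ge> 0"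
  using opnorm_upper[of M S "\<lambda>x. 0"] L2_zero[of M] L2norm_nonneg[of M "S (\<lambda>x. 0)"] by auto

lemma opnorm_least:
  assumes "\<And>f. f \<in> L2 M \<Longrightarrow> L2norm M f \<le> 1 \<Longrightarrow> L2norm M (S f) \<le> K"
  shows "opnorm M S \<le> K"
  unfolding opnorm_def by (rule cSUP_least) (use L2_zero[of M] assms in auto)

lemma opnorm_le:
  assumes "K \<ge> 0" "\<And>f. f \<in> L2 M \<Longrightarrow> L2norm M (S f) \<le> K * L2norm M f"
  shows "opnorm M S \<le> K"
proof (rule opnorm_least)
  fix f assume "f \<in> L2 M" "L2norm M f \<le> 1"
  then show "L2norm M (S f) \<le> K"
    using assms mult_left_le[of "L2norm M f" K] by (smt (verit))
qed

lemma L2norm_apply_le_opnorm: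
  assumes S: "bounded_op M S" and f: "f \<in> L2 M"
  shows "L2norm M (S f) \<le> opnorm M S * L2norm M f"
proof (cases "L2norm M f = 0")
  case True
  have "AE x in M. S f x = S (\<lambda>y. 0) x"
    by (rule bounded_op_cong_AE[OF S f L2_zero(1) L2norm_eq_0_AE[OF f True]])
  with bounded_op_zero_AE[OF S] have "AE x in M. S f x = 0" by eventually_elim simp
  then have "L2norm M (S f) = L2norm M (\<lambda>x. 0)"
    by (intro L2norm_cong_AE L2_measurable bounded_op_L2[OF S f] L2_zero(1))
  then show ?thesis using True L2_zero(2)[of M] by simp
next
  case False
  define t where "t = L2norm M f"
  have t: "t > 0" using False L2norm_nonneg[of M f] t_def by simp
  define c where "c = complex_of_real (1 / t)"
  have cf: "(\<lambda>y. c * f y) \<in> L2 M" "L2norm M (\<lambda>y. c * f y) = 1"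
    using L2_scale[OF f, of c] t unfolding c_def t_def by (auto simp: norm_divide)
  have Sf: "S f \<in> L2 M" by (rule bounded_op_L2[OF S f])
  have "(1 / t) * L2norm M (S f) = L2norm M (\<lambda>x. c * S f x)"
    using L2_scale(2)[OF Sf, of c] t unfolding c_def by (simp add: norm_divide)
  also have "\<dots> = L2norm M (S (\<lambda>y. c * f y))"
    by (rule L2norm_cong_AE[OF _ _ AE_symmetric[OF bounded_op_scale_AE[OF S f]]])
      (use L2_measurable L2_scale(1)[OF Sf] bounded_op_L2[OF S cf(1)] in auto)
  also have "\<dots> \<le> opnorm M S" by (rule opnorm_upper[OF S cf(1)]) (simp add: cf)
  finally show ?thesis using t unfolding t_def by (simp add: field_simps mult.commute)
qed

lemma opnorm_mult_ind_mono:
  assumes T: "bounded_op M T" and "A \<in> sets M" "B \<in> sets M" "A \<subseteq> B"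
  shows "opnorm M (mult_ind A T) \<le> opnorm M (mult_ind B T)"
proof (rule opnorm_least)
  fix f assume f: "f \<in> L2 M" "L2norm M f \<le> 1"
  have Tf: "T f \<in> L2 M" by (rule bounded_op_L2[OF T f(1)])
  have "L2norm M (mult_ind A T f) \<le> L2norm M (mult_ind B T f)"
    unfolding mult_ind_def
    by (rule L2_dominated(2)[OF _ L2_mult_indicator(1)[OF Tf \<open>B \<in> sets M\<close>]])
      (use L2_measurable[OF Tf] assms in \<open>auto simp: indicator_def\<close>)
  also have "\<dots> \<le> opnorm M (mult_ind B T)"
    by (rule opnorm_upper[OF bounded_op_mult_ind[OF T \<open>B \<in> sets M\<close>] f])
  finally show "L2norm M (mult_ind A T f) \<le> opnorm M (mult_ind B T)" .
qed

subsection \<open>Separated sets\<close>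

definition separated :: "'a::metric_space set \<Rightarrow> bool" where
  "separated S \<longleftrightarrow> (\<forall>s\<in>S. \<forall>t\<in>S. s \<noteq> t \<longrightarrow> dist s t > 1)"

lemma separated_insert:
  "separated S \<Longrightarrow> \<forall>s\<in>S. dist x s > 1 \<Longrightarrow> separated (insert x S)"
  unfolding separated_def by (auto simp: dist_commute)

lemma exists_maximal_separated_subset:
  fixes A :: "'a::metric_space set"
  obtains S where "S \<subseteq> A" "separated S" "\<And>x. x \<in> A \<Longrightarrow> \<exists>s\<in>S. dist x s \<le> 1"
proof -
  define P where "P = {S. S \<subseteq> A \<and> separated S}"
  have "\<Union>C \<in> P" if C: "C \<in> chains P" for C
  proof -
    have "separated (\<Union>C)" unfolding separated_def
    proof (intro ballI impI)
      fix s t assume "s \<in> \<Union>C" "t \<in> \<Union>C" "s \<noteq> t"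
      then obtain X Y where "X \<in> C" "Y \<in> C" "s \<in> X" "t \<in> Y" by blast
      moreover have "X \<subseteq> Y \<or> Y \<subseteq> X"
        using C \<open>X \<in> C\<close> \<open>Y \<in> C\<close> unfolding chains_def chain_subset_def by blast
      then have "X \<union> Y \<in> C" using \<open>X \<in> C\<close> \<open>Y \<in> C\<close> by (metis Un_absorb1 Un_absorb2)
      ultimately have "s \<in> X \<union> Y" "t \<in> X \<union> Y" "X \<union> Y \<in> P"
        using C unfolding chains_def by auto
      then show "dist s t > 1" using \<open>s \<noteq> t\<close> unfolding P_def separated_def by blast
    qed
    then show ?thesis using C unfolding P_def chains_def by auto
  qed
  then obtain S where S: "S \<in> P" and maximal: "\<And>X. X \<in> P \<Longrightarrow> S \<subseteq> X \<Longrightarrow> X = S"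
    using Zorn_Lemma[of P] by blast
  have "\<exists>s\<in>S. dist x s \<le> 1" if x: "x \<in> A" for x
  proof (rule ccontr)
    assume far: "\<not> (\<exists>s\<in>S. dist x s \<le> 1)"
    then have "insert x S \<in> P"
      using S x separated_insert[of S x] unfolding P_def by (auto simp: not_le)
    then have "x \<in> S" using maximal by blast
    then show False using far by force
  qed
  then show thesis using that S unfolding P_def by blast
qed

text \<open>The half-balls around the points of a separated set are disjoint and lie in a slightly
  larger ball, which caps their number.\<close>
lemma separated_card_le:
  fixes M :: "'a::metric_space measure" and S :: "'a set"
  assumes sets_M: "sets M = sets borel"
    and upper: "emeasure M (cball y (R + 1/2)) \<le> ennreal C" and "C \<ge> 0"
    and lower: "\<And>x. emeasure M (cball x (1/2)) \<ge> ennreal c" and "c > 0"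
    and "separated S" and K: "K \<subseteq> {s\<in>S. dist y s \<le> R}" "finite K"
  shows "c * card K \<le> C"
proof -
  have disj: "disjoint_family_on (\<lambda>s. cball s (1/2)) K"
    unfolding disjoint_family_on_def
  proof (intro ballI impI equals0I)
    fix s t z assume "s \<in> K" "t \<in> K" "s \<noteq> t" "z \<in> cball s (1/2) \<inter> cball t (1/2)"
    then have "dist s t > 1" "dist s z \<le> 1/2" "dist t z \<le> 1/2"
      using \<open>separated S\<close> K unfolding separated_def by auto
    then show False using dist_triangle[of s t z] dist_commute[of z t] by linarith
  qed
  have "ennreal (c * card K) = (\<Sum>s\<in>K. ennreal c)"
    using \<open>c > 0\<close> by (simp add: ennreal_mult ennreal_of_nat_eq_real_of_nat mult.commute)
  also have "\<dots> \<le> (\<Sum>s\<in>K. emeasure M (cball s (1/2)))"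
    by (rule sum_mono) (rule lower)
  also have "\<dots> = emeasure M (\<Union>s\<in>K. cball s (1/2))"
    by (rule sum_emeasure[OF _ disj \<open>finite K\<close>]) (auto simp: sets_M)
  also have "\<dots> \<le> emeasure M (cball y (R + 1/2))"
  proof (rule emeasure_mono)
    show "(\<Union>s\<in>K. cball s (1/2)) \<subseteq> cball y (R + 1/2)"
    proof
      fix z assume "z \<in> (\<Union>s\<in>K. cball s (1/2))"
      then obtain s where "s \<in> K" "dist s z \<le> 1/2" by auto
      then show "z \<in> cball y (R + 1/2)" using K dist_triangle[of y z s] by auto
    qed
  qed (simp add: sets_M)
  also have "\<dots> \<le> ennreal C" by (rule upper)
  finally show ?thesis using ennreal_le_iff[OF \<open>C \<ge> 0\<close>] by blast
qed

lemma separated_locally_finite: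
  fixes M :: "'a::metric_space measure" and S :: "'a set"
  assumes sets_M: "sets M = sets borel"
    and upper: "\<And>y. emeasure M (cball y (R + 1/2)) \<le> ennreal C" and "C \<ge> 0"
    and lower: "\<And>x. emeasure M (cball x (1/2)) \<ge> ennreal c" and "c > 0"
    and "separated S"
  shows "finite {s\<in>S. dist y s \<le> R}" "card {s\<in>S. dist y s \<le> R} \<le> nat \<lceil>C / c\<rceil>"
proof -
  have card_le: "card K \<le> nat \<lceil>C / c\<rceil>" if "K \<subseteq> {s\<in>S. dist y s \<le> R}" "finite K" for K
  proof -
    have "c * card K \<le> C"
      by (rule separated_card_le[OF sets_M upper[of y] \<open>C \<ge> 0\<close> lower \<open>c > 0\<close> \<open>separated S\<close> that])
    then have "card K \<le> C / c" using \<open>c > 0\<close> by (simp add: field_simps)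
    then show ?thesis by linarith
  qed
  show fin: "finite {s\<in>S. dist y s \<le> R}"
  proof (rule ccontr)
    assume "infinite {s\<in>S. dist y s \<le> R}"
    then obtain K where "K \<subseteq> {s\<in>S. dist y s \<le> R}" "finite K" "card K = Suc (nat \<lceil>C / c\<rceil>)"
      using infinite_arbitrarily_large by blast
    then show False using card_le[of K] by simp
  qed
  show "card {s\<in>S. dist y s \<le> R} \<le> nat \<lceil>C / c\<rceil>" by (rule card_le[OF order.refl fin])
qed

lemma separated_uniformly_locally_finite:
  fixes M :: "'a::metric_space measure"
  assumes sets_M: "sets M = sets borel"
    and upper: "\<And>r. r > 0 \<Longrightarrow> \<exists>C::real. \<forall>x. emeasure M (cball x r) \<le> ennreal C"
    and lower: "\<And>x. emeasure M (cball x (1/2)) \<ge> ennreal c" and "c > 0"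
  obtains N where "\<And>(S :: 'a set) y. separated S \<Longrightarrow> finite {s\<in>S. dist y s \<le> R}"
    and "\<And>(S :: 'a set) y. separated S \<Longrightarrow> card {s\<in>S. dist y s \<le> R} \<le> N"
proof -
  have "max R 0 + 1/2 > 0" by linarith
  then obtain C where C: "\<And>y. emeasure M (cball y (max R 0 + 1/2)) \<le> ennreal C"
    using upper by blast
  have upper': "emeasure M (cball y (R + 1/2)) \<le> ennreal (max C 0)" for y
  proof -
    have "emeasure M (cball y (R + 1/2)) \<le> emeasure M (cball y (max R 0 + 1/2))"
      by (rule emeasure_mono) (auto simp: sets_M)
    also have "\<dots> \<le> ennreal (max C 0)" by (rule order_trans[OF C ennreal_leI]) simp
    finally show ?thesis .
  qed
  have "max C 0 \<ge> 0" by simp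
  from separated_locally_finite[OF sets_M upper' this lower \<open>c > 0\<close>] show thesis by (rule that)
qed

subsection \<open>Controlled operators\<close>

definition controlled_within ::
    "real \<Rightarrow> 'a::metric_space measure \<Rightarrow> (('a \<Rightarrow> complex) \<Rightarrow> ('a \<Rightarrow> complex)) \<Rightarrow> bool" where
  "controlled_within r M T \<longleftrightarrow> (\<forall>F G. closed F \<longrightarrow> closed G \<longrightarrow> setdist_gt_inf r F G \<longrightarrow>
      (\<forall>f\<in>L2 M. AE x in M. indicator F x * T (\<lambda>y. indicator G y * f y) x = 0))"

lemma controlled_iff_controlled_within: "controlled M T \<longleftrightarrow> (\<exists>r>0. controlled_within r M T)"
  unfolding controlled_def controlled_within_def ..

lemma controlled_within_localize:
  fixes M :: "'a::metric_space measure"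
  assumes sets_M: "sets M = sets borel" and T: "bounded_op M T"
    and ctrl: "controlled_within r M T" and f: "f \<in> L2 M"
  shows "L2norm M (mult_ind (cball s \<rho>) T f)
     \<le> opnorm M (mult_ind (cball s \<rho>) T) * L2norm M (\<lambda>y. indicator (ball s (\<rho> + r + 1)) y * f y)"
proof -
  define B where "B = cball s \<rho>"
  define G where "G = ball s (\<rho> + r + 1)"
  define f_near where "f_near = (\<lambda>y. indicator G y * f y)"
  define f_far where "f_far = (\<lambda>y. indicator (- G) y * f y)"
  have B: "B \<in> sets M" unfolding B_def sets_M by simp
  have near: "f_near \<in> L2 M" unfolding f_near_def by (rule L2_mult_indicator(1)[OF f]) (simp add: G_def sets_M)
  have far: "f_far \<in> L2 M" unfolding f_far_def by (rule L2_mult_indicator(1)[OF f]) (simp add: G_def sets_M)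
  have "(\<lambda>y. 1 * f_near y + f_far y) = f"
    unfolding f_near_def f_far_def by (auto simp: indicator_def)
  with bounded_op_linear_AE[OF T near far, of 1]
  have split: "AE x in M. T f x = T f_near x + T f_far x" by simp
  have "setdist_gt_inf r B (- G)" unfolding setdist_gt_inf_def
  proof (intro exI[of _ "r + 1"] conjI ballI)
    fix x y assume "x \<in> B" "y \<in> - G"
    then show "dist x y \<ge> r + 1" using dist_triangle[of s y x] unfolding B_def G_def by auto
  qed simp
  moreover have "closed B" "closed (- G)" unfolding B_def G_def by auto
  ultimately have "AE x in M. indicator B x * T f_far x = 0"
    using ctrl f unfolding controlled_within_def f_far_def by blast
  with split have "AE x in M. mult_ind B T f x = mult_ind B T f_near x"
    unfolding mult_ind_def by eventually_elim (simp add: algebra_simps)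
  then have "L2norm M (mult_ind B T f) = L2norm M (mult_ind B T f_near)"
    by (rule L2norm_cong_AE[rotated 2])
      (use L2_measurable bounded_op_L2[OF bounded_op_mult_ind[OF T B]] f near in auto)
  also have "\<dots> \<le> opnorm M (mult_ind B T) * L2norm M f_near"
    by (rule L2norm_apply_le_opnorm[OF bounded_op_mult_ind[OF T B] near])
  finally show ?thesis unfolding B_def G_def f_near_def .
qed

subsection \<open>Almost orthogonality over a locally finite cover\<close>

lemma indicator_mult_le_sum_cover:
  fixes h :: real
  assumes "finite K" "A \<subseteq> (\<Union>s\<in>K. B s)" "h \<ge> 0"
  shows "indicator A x * h \<le> (\<Sum>s\<in>K. indicator (B s) x * h)"
proof (cases "x \<in> A")
  case True
  then obtain s where "s \<in> K" "x \<in> B s" using assms(2) by blast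
  then have "indicator (B s) x * h \<le> (\<Sum>s\<in>K. indicator (B s) x * h)"
    by (intro member_le_sum assms(1)) (auto simp: assms(3))
  then show ?thesis using True \<open>x \<in> B s\<close> by simp
qed (simp add: sum_nonneg assms(3))

lemma sum_indicator_mult_le_card:
  fixes h :: real
  assumes "finite K" "card {s\<in>K. x \<in> B s} \<le> N" "h \<ge> 0"
  shows "(\<Sum>s\<in>K. indicator (B s) x * h) \<le> N * h"
proof -
  have "(\<Sum>s\<in>K. indicator (B s) x * h) = (\<Sum>s\<in>K. if x \<in> B s then h else 0)"
    by (rule sum.cong) (auto simp: indicator_def)
  also have "\<dots> = (\<Sum>s\<in>{s\<in>K. x \<in> B s}. h)" by (rule sum.inter_filter[symmetric, OF assms(1)])
  also have "\<dots> = card {s\<in>K. x \<in> B s} * h" by simp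
  also have "\<dots> \<le> N * h" using assms(2,3) by (simp add: mult_right_mono)
  finally show ?thesis .
qed

lemma controlled_within_finite_cover_estimate:
  fixes M :: "'a::metric_space measure"
  assumes sets_M: "sets M = sets borel" and T: "bounded_op M T"
    and ctrl: "controlled_within r M T" and f: "f \<in> L2 M"
    and K: "finite K" and cover: "A \<subseteq> (\<Union>s\<in>K. cball s \<rho>)" and A: "A \<in> sets M"
    and small: "\<And>s. s \<in> K \<Longrightarrow> opnorm M (mult_ind (cball s \<rho>) T) \<le> \<delta>"
    and multiplicity: "\<And>x. card {s\<in>K. x \<in> ball s (\<rho> + r + 1)} \<le> N"
  shows "integral\<^sup>L M (\<lambda>x. indicator A x * (cmod (T f x))^2)
    \<le> N * \<delta>^2 * integral\<^sup>L M (\<lambda>x. (cmod (f x))^2)"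
proof -
  define R where "R = \<rho> + r + 1"
  have Tf_int: "integrable M (\<lambda>x. (cmod (T f x))^2)" by (rule L2_integrable[OF bounded_op_L2[OF T f]])
  have f_int: "integrable M (\<lambda>x. (cmod (f x))^2)" by (rule L2_integrable[OF f])
  have A_int: "integrable M (\<lambda>x. indicator A x * (cmod (T f x))^2)"
    using integrable_mult_indicator[OF A Tf_int] by simp
  have ball_int: "integrable M (\<lambda>x. indicator (ball s R) x * (cmod (f x))^2)" for s
    using integrable_mult_indicator[OF _ f_int, of "ball s R"] by (simp add: sets_M)
  have cball_int: "integrable M (\<lambda>x. indicator (cball s \<rho>) x * (cmod (T f x))^2)" for s
    using integrable_mult_indicator[OF _ Tf_int, of "cball s \<rho>"] by (simp add: sets_M)
  have local: "integral\<^sup>L M (\<lambda>x. indicator (cball s \<rho>) x * (cmod (T f x))^2)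
      \<le> \<delta>^2 * integral\<^sup>L M (\<lambda>x. indicator (ball s R) x * (cmod (f x))^2)" if "s \<in> K" for s
  proof -
    have "L2norm M (mult_ind (cball s \<rho>) T f)
        \<le> opnorm M (mult_ind (cball s \<rho>) T) * L2norm M (\<lambda>y. indicator (ball s R) y * f y)"
      unfolding R_def by (rule controlled_within_localize[OF sets_M T ctrl f])
    also have "\<dots> \<le> \<delta> * L2norm M (\<lambda>y. indicator (ball s R) y * f y)"
      by (rule mult_right_mono[OF small[OF that] L2norm_nonneg])
    finally have "(L2norm M (mult_ind (cball s \<rho>) T f))^2
        \<le> (\<delta> * L2norm M (\<lambda>y. indicator (ball s R) y * f y))^2"
      by (rule power_mono[OF _ L2norm_nonneg])
    then show ?thesis unfolding mult_ind_def power_mult_distrib L2norm_mult_indicator_power2 .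
  qed
  have "integral\<^sup>L M (\<lambda>x. indicator A x * (cmod (T f x))^2)
      \<le> integral\<^sup>L M (\<lambda>x. \<Sum>s\<in>K. indicator (cball s \<rho>) x * (cmod (T f x))^2)"
    by (intro integral_mono Bochner_Integration.integrable_sum cball_int
        indicator_mult_le_sum_cover[OF K cover] A_int) simp
  also have "\<dots> = (\<Sum>s\<in>K. integral\<^sup>L M (\<lambda>x. indicator (cball s \<rho>) x * (cmod (T f x))^2))"
    by (rule Bochner_Integration.integral_sum[OF cball_int])
  also have "\<dots> \<le> (\<Sum>s\<in>K. \<delta>^2 * integral\<^sup>L M (\<lambda>x. indicator (ball s R) x * (cmod (f x))^2))"
    by (rule sum_mono[OF local])
  also have "\<dots> = \<delta>^2 * integral\<^sup>L M (\<lambda>x. \<Sum>s\<in>K. indicator (ball s R) x * (cmod (f x))^2)"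
    by (simp add: Bochner_Integration.integral_sum[OF ball_int] sum_distrib_left)
  also have "\<dots> \<le> \<delta>^2 * integral\<^sup>L M (\<lambda>x. N * (cmod (f x))^2)"
    using multiplicity[folded R_def]
    by (intro mult_left_mono integral_mono Bochner_Integration.integrable_sum ball_int
        sum_indicator_mult_le_card[OF K]) (auto intro: f_int)
  also have "\<dots> = N * \<delta>^2 * integral\<^sup>L M (\<lambda>x. (cmod (f x))^2)" by simp
  finally show ?thesis .
qed

lemma integral_indicator_le_of_exhaustion:
  fixes h :: "'a::metric_space \<Rightarrow> real"
  assumes h: "integrable M h" and A: "A \<in> sets M" and balls: "\<And>n. cball a (real n) \<in> sets M"
    and bound: "\<And>n. integral\<^sup>L M (\<lambda>x. indicator (A \<inter> cball a (real n)) x * h x) \<le> C"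
  shows "integral\<^sup>L M (\<lambda>x. indicator A x * h x) \<le> C"
proof (rule LIMSEQ_le_const2[OF _ exI[of _ 0], OF _ allI[OF impI[OF bound]]])
  show "(\<lambda>n. integral\<^sup>L M (\<lambda>x. indicator (A \<inter> cball a (real n)) x * h x))
      \<longlonglongrightarrow> integral\<^sup>L M (\<lambda>x. indicator A x * h x)"
  proof (rule integral_dominated_convergence[OF _ _ integrable_norm[OF h]])
    show "AE x in M. (\<lambda>n. indicator (A \<inter> cball a (real n)) x * h x) \<longlonglongrightarrow> indicator A x * h x"
    proof (rule AE_I2, rule tendsto_eventually)
      fix x
      obtain m :: nat where m: "dist a x \<le> real m" using real_arch_simple by blast
      have "indicator (A \<inter> cball a (real n)) x = indicator A x" if "n \<ge> m" for n
        using m that by (auto simp: indicator_def)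
      then show "\<forall>\<^sub>F n in sequentially. indicator (A \<inter> cball a (real n)) x * h x = indicator A x * h x"
        unfolding eventually_sequentially by auto
    qed
  next
    have [measurable]: "h \<in> borel_measurable M" using h by simp
    show "(\<lambda>x. indicator A x * h x) \<in> borel_measurable M" using A by measurable
    show "(\<lambda>x. indicator (A \<inter> cball a (real n)) x * h x) \<in> borel_measurable M" for n
      using A balls[of n] by measurable
  qed (auto simp: indicator_def)
qed

lemma controlled_within_opnorm_le_of_cover:
  fixes M :: "'a::metric_space measure" and S :: "'a set"
  assumes sets_M: "sets M = sets borel" and T: "bounded_op M T"
    and ctrl: "controlled_within r M T"
    and locally_finite: "\<And>y R. finite {s\<in>S. dist y s \<le> R}"
    and multiplicity: "\<And>y. card {s\<in>S. dist y s \<le> \<rho> + r + 1} \<le> N"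
    and small: "\<And>s. s \<in> S \<Longrightarrow> opnorm M (mult_ind (cball s \<rho>) T) \<le> \<delta>" and "\<delta> \<ge> 0"
    and cover: "F \<subseteq> (\<Union>s\<in>S. cball s \<rho>)" and F: "F \<in> sets M"
  shows "opnorm M (mult_ind F T) \<le> sqrt N * \<delta>"
proof (rule opnorm_le)
  show "0 \<le> sqrt N * \<delta>" using \<open>\<delta> \<ge> 0\<close> by simp
  fix f assume f: "f \<in> L2 M"
  \<comment> \<open>Exhaust \<open>F\<close> by the bounded pieces \<open>F \<inter> B\<^sub>a(n)\<close>, each covered by finitely many balls.\<close>
  fix a :: 'a
  have pieces: "integral\<^sup>L M (\<lambda>x. indicator (F \<inter> cball a (real n)) x * (cmod (T f x))^2)
      \<le> N * \<delta>^2 * integral\<^sup>L M (\<lambda>x. (cmod (f x))^2)" for n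
  proof -
    define K where "K = {s\<in>S. dist a s \<le> real n + \<rho>}"
    have cover_n: "F \<inter> cball a (real n) \<subseteq> (\<Union>s\<in>K. cball s \<rho>)"
    proof
      fix z assume z: "z \<in> F \<inter> cball a (real n)"
      then obtain s where "s \<in> S" "z \<in> cball s \<rho>" using cover by auto
      moreover from this have "s \<in> K"
        using z dist_triangle[of a s z] dist_commute[of s z] unfolding K_def by simp
      ultimately show "z \<in> (\<Union>s\<in>K. cball s \<rho>)" by blast
    qed
    have multiplicity_n: "card {s\<in>K. x \<in> ball s (\<rho> + r + 1)} \<le> N" for x
    proof -
      have "card {s\<in>K. x \<in> ball s (\<rho> + r + 1)} \<le> card {s\<in>S. dist x s \<le> \<rho> + r + 1}"
        by (rule card_mono[OF locally_finite]) (auto simp: K_def mem_ball dist_commute[of _ x])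
      also have "\<dots> \<le> N" by (rule multiplicity)
      finally show ?thesis .
    qed
    have "finite K" using locally_finite unfolding K_def .
    moreover have "F \<inter> cball a (real n) \<in> sets M" using F by (simp add: sets_M)
    moreover have "opnorm M (mult_ind (cball s \<rho>) T) \<le> \<delta>" if "s \<in> K" for s
      using small that unfolding K_def by blast
    ultimately show ?thesis
      by (rule controlled_within_finite_cover_estimate[OF sets_M T ctrl f _ cover_n _ _ multiplicity_n])
  qed
  have "(L2norm M (mult_ind F T f))^2 \<le> N * \<delta>^2 * (L2norm M f)^2"
    unfolding mult_ind_def L2norm_mult_indicator_power2 L2norm_power2
    by (rule integral_indicator_le_of_exhaustion[OF _ F _ pieces])
      (auto simp: sets_M intro: L2_integrable bounded_op_L2[OF T f])
  also have "\<dots> = (sqrt N * \<delta> * L2norm M f)^2" by (simp add: power_mult_distrib)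
  finally show "L2norm M (mult_ind F T f) \<le> sqrt N * \<delta> * L2norm M f"
    by (rule power2_le_imp_le) (simp add: \<open>\<delta> \<ge> 0\<close> L2norm_nonneg)
qed

subsection \<open>The two implications\<close>

lemma cball_subset_of_mem_inner_nbhd: "x \<in> inner_nbhd F r \<Longrightarrow> cball x r \<subseteq> F"
  unfolding inner_nbhd_def by force

lemma UNIV_mem_co: "UNIV \<in> co \<xi>"
  unfolding co_def inner_nbhd_def by (simp add: gt_ex)

lemma bdd_below_opnorm_mult_ind:
  "bounded_op M T \<Longrightarrow> \<F> \<subseteq> sets M \<Longrightarrow> bdd_below ((\<lambda>F. opnorm M (mult_ind F T)) ` \<F>)"
  by (rule bdd_belowI2[of _ 0]) (auto intro: opnorm_nonneg bounded_op_mult_ind)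

lemma tendsto_opnorm_cball_of_INF_co_eq_0:
  fixes M :: "'a::metric_space measure"
  assumes sets_M: "sets M = sets borel" and T: "bounded_op M T"
    and INF_0: "(INF F \<in> {F \<in> sets M. F \<in> co \<xi>}. opnorm M (mult_ind F T)) = 0" and "r > 0"
  shows "((\<lambda>x. opnorm M (mult_ind (cball x r) T)) \<longlongrightarrow> 0) \<xi>"
proof (rule order_tendstoI)
  fix a :: real
  assume "a < 0"
  moreover have "opnorm M (mult_ind (cball x r) T) \<ge> 0" for x
    by (simp add: opnorm_nonneg bounded_op_mult_ind T sets_M)
  ultimately show "\<forall>\<^sub>F x in \<xi>. a < opnorm M (mult_ind (cball x r) T)"
    by (intro always_eventually allI) (meson less_le_trans)
next
  fix a :: real
  assume "0 < a"
  then have "(INF F \<in> {F \<in> sets M. F \<in> co \<xi>}. opnorm M (mult_ind F T)) < a" using INF_0 by simp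
  moreover have "{F \<in> sets M. F \<in> co \<xi>} \<noteq> {}" using UNIV_mem_co[of \<xi>] by (auto simp: sets_M)
  moreover have "bdd_below ((\<lambda>F. opnorm M (mult_ind F T)) ` {F \<in> sets M. F \<in> co \<xi>})"
    by (rule bdd_below_opnorm_mult_ind[OF T]) blast
  ultimately obtain F where F: "F \<in> sets M" "F \<in> co \<xi>" "opnorm M (mult_ind F T) < a"
    using cINF_less_iff by (metis (no_types, lifting) mem_Collect_eq)
  have "\<forall>\<^sub>F x in \<xi>. x \<in> inner_nbhd F r" using F(2) \<open>r > 0\<close> unfolding co_def by blast
  then show "\<forall>\<^sub>F x in \<xi>. opnorm M (mult_ind (cball x r) T) < a"
  proof (rule eventually_mono)
    fix x assume "x \<in> inner_nbhd F r"
    then have "opnorm M (mult_ind (cball x r) T) \<le> opnorm M (mult_ind F T)"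
      by (intro opnorm_mult_ind_mono[OF T] cball_subset_of_mem_inner_nbhd F(1)) (simp add: sets_M)
    then show "opnorm M (mult_ind (cball x r) T) < a" using F(3) by simp
  qed
qed

lemma union_balls_mem_co:
  fixes M :: "'a::metric_space measure"
  assumes sets_M: "sets M = sets borel" and T: "bounded_op M T"
    and lim: "\<And>r. r > 0 \<Longrightarrow> ((\<lambda>x. opnorm M (mult_ind (cball x r) T)) \<longlongrightarrow> 0) \<xi>"
    and "\<delta> > 0"
  shows "(\<Union>x\<in>{x. opnorm M (mult_ind (cball x 2) T) < \<delta>}. ball x 1) \<in> co \<xi>"
  (is "?F \<in> _")
  unfolding co_def
proof (intro CollectI allI impI)
  fix r :: real assume "r > 0"
  with lim[of "r + 3"] \<open>\<delta> > 0\<close>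
  have "\<forall>\<^sub>F x in \<xi>. opnorm M (mult_ind (cball x (r + 3)) T) < \<delta>" by (simp add: order_tendstoD(2))
  then show "\<forall>\<^sub>F x in \<xi>. x \<in> inner_nbhd ?F r"
  proof (rule eventually_mono)
    fix x assume x: "opnorm M (mult_ind (cball x (r + 3)) T) < \<delta>"
    have "dist x y \<ge> r + 1" if "y \<notin> ?F" for y
    proof (rule ccontr)
      assume "\<not> dist x y \<ge> r + 1"
      have "cball y 2 \<subseteq> cball x (r + 3)"
      proof
        fix z assume "z \<in> cball y 2"
        then show "z \<in> cball x (r + 3)" using \<open>\<not> dist x y \<ge> r + 1\<close> dist_triangle[of x z y] by simp
      qed
      then have "opnorm M (mult_ind (cball y 2) T) \<le> opnorm M (mult_ind (cball x (r + 3)) T)"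
        by (intro opnorm_mult_ind_mono[OF T]) (simp_all add: sets_M)
      then have "y \<in> ?F" using x by (intro UN_I[of y]) auto
      then show False using that by blast
    qed
    then show "x \<in> inner_nbhd ?F r" unfolding inner_nbhd_def by (intro CollectI exI[of _ "r + 1"]) simp
  qed
qed

lemma INF_opnorm_co_le:
  fixes M :: "'a::metric_space measure"
  assumes sets_M: "sets M = sets borel" and T: "bounded_op M T"
    and ctrl: "controlled_within r M T"
    and lim: "\<And>r. r > 0 \<Longrightarrow> ((\<lambda>x. opnorm M (mult_ind (cball x r) T)) \<longlongrightarrow> 0) \<xi>"
    and locally_finite: "\<And>(S :: 'a set) y R. separated S \<Longrightarrow> finite {s\<in>S. dist y s \<le> R}"
    and multiplicity: "\<And>(S :: 'a set) y. separated S \<Longrightarrow> card {s\<in>S. dist y s \<le> r + 3} \<le> N"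
    and "\<delta> > 0"
  shows "(INF F \<in> {F \<in> sets M. F \<in> co \<xi>}. opnorm M (mult_ind F T)) \<le> sqrt N * \<delta>"
proof -
  define A where "A = {x. opnorm M (mult_ind (cball x 2) T) < \<delta>}"
  define F where "F = (\<Union>x\<in>A. ball x 1)"
  obtain S where "S \<subseteq> A" "separated S" and near: "\<And>x. x \<in> A \<Longrightarrow> \<exists>s\<in>S. dist x s \<le> 1"
    using exists_maximal_separated_subset by blast
  have "open F" unfolding F_def by (simp add: open_UN)
  then have F_mem: "F \<in> {F \<in> sets M. F \<in> co \<xi>}"
    using union_balls_mem_co[OF sets_M T lim \<open>\<delta> > 0\<close>] unfolding F_def A_def by (simp add: sets_M)
  have cover: "F \<subseteq> (\<Union>s\<in>S. cball s 2)"
  proof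
    fix z assume "z \<in> F"
    then obtain x where "x \<in> A" "dist x z < 1" unfolding F_def by auto
    moreover obtain s where "s \<in> S" "dist x s \<le> 1" using near[OF \<open>x \<in> A\<close>] by blast
    ultimately have "dist s z \<le> 2" using dist_triangle[of s z x] by (simp add: dist_commute)
    with \<open>s \<in> S\<close> show "z \<in> (\<Union>s\<in>S. cball s 2)" by auto
  qed
  have F_small: "opnorm M (mult_ind F T) \<le> sqrt N * \<delta>"
  proof (rule controlled_within_opnorm_le_of_cover[OF sets_M T ctrl, where \<rho> = 2])
    show "finite {s\<in>S. dist y s \<le> R}" for y R by (rule locally_finite[OF \<open>separated S\<close>])
    have "2 + r + 1 = r + 3" by simp
    then show "card {s\<in>S. dist y s \<le> 2 + r + 1} \<le> N" for y
      using multiplicity[OF \<open>separated S\<close>] by presburger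
    show "opnorm M (mult_ind (cball s 2) T) \<le> \<delta>" if "s \<in> S" for s
      using \<open>S \<subseteq> A\<close> that unfolding A_def by fastforce
  qed (use \<open>\<delta> > 0\<close> F_mem cover in auto)
  have "bdd_below ((\<lambda>F. opnorm M (mult_ind F T)) ` {F \<in> sets M. F \<in> co \<xi>})"
    by (rule bdd_below_opnorm_mult_ind[OF T]) blast
  then show ?thesis using F_mem F_small by (rule cINF_lower2)
qed

lemma INF_opnorm_co_eq_0_of_tendsto:
  fixes M :: "'a::metric_space measure"
  assumes sets_M: "sets M = sets borel" and T: "bounded_op M T" and "controlled M T"
    and upper: "\<And>r. r > 0 \<Longrightarrow> \<exists>C::real. \<forall>x. emeasure M (cball x r) \<le> ennreal C"
    and lower: "\<exists>c::real. c > 0 \<and> (\<forall>x. emeasure M (cball x (1/2)) \<ge> ennreal c)"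
    and lim: "\<And>r. r > 0 \<Longrightarrow> ((\<lambda>x. opnorm M (mult_ind (cball x r) T)) \<longlongrightarrow> 0) \<xi>"
  shows "(INF F \<in> {F \<in> sets M. F \<in> co \<xi>}. opnorm M (mult_ind F T)) = 0"
proof -
  let ?I = "(INF F \<in> {F \<in> sets M. F \<in> co \<xi>}. opnorm M (mult_ind F T))"
  obtain r where ctrl: "controlled_within r M T"
    using \<open>controlled M T\<close> controlled_iff_controlled_within by blast
  obtain c :: real where "c > 0" and c: "\<And>x. emeasure M (cball x (1/2)) \<ge> ennreal c"
    using lower by blast
  obtain N where multiplicity: "\<And>(S :: 'a set) y. separated S \<Longrightarrow> card {s\<in>S. dist y s \<le> r + 3} \<le> N"
    using separated_uniformly_locally_finite[OF sets_M upper c \<open>c > 0\<close>] by metis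
  have locally_finite: "finite {s\<in>S. dist y s \<le> R}" if "separated S" for S :: "'a set" and y R
    using separated_uniformly_locally_finite[OF sets_M upper c \<open>c > 0\<close>, of R] that by metis
  have "?I \<le> 0"
  proof (rule field_le_epsilon)
    fix e :: real assume "e > 0"
    have "sqrt N + 1 > 0" using real_sqrt_ge_zero[of N] by linarith
    then have "?I \<le> sqrt N * (e / (sqrt N + 1))"
      using \<open>e > 0\<close> by (intro INF_opnorm_co_le[OF sets_M T ctrl lim locally_finite multiplicity]) auto
    also have "\<dots> \<le> e"
      using \<open>e > 0\<close> \<open>sqrt N + 1 > 0\<close> by (simp add: pos_divide_le_eq algebra_simps)
    finally show "?I \<le> 0 + e" by simp
  qed
  moreover have "?I \<ge> 0"
    using UNIV_mem_co[of \<xi>] by (intro cINF_greatest opnorm_nonneg bounded_op_mult_ind[OF T]) (auto simp: sets_M)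
  ultimately show ?thesis by simp
qed

theorem proposition5p8:
  fixes M :: "'a::metric_space measure"
    and T :: "('a \<Rightarrow> complex) \<Rightarrow> ('a \<Rightarrow> complex)"
    and \<xi> :: "'a filter"
  assumes proper: "\<And>(x::'a) r. compact (cball x r)"
    and noncompact: "\<not> compact (UNIV :: 'a set)"
    and space_M: "space M = UNIV"
    and sets_M: "sets M = sets borel"
    and ball_pos: "\<And>x r. r > 0 \<Longrightarrow> emeasure M (cball x r) > 0"
    and ball_unif_bdd: "\<And>r. r > 0 \<Longrightarrow> \<exists>C::real. \<forall>x. emeasure M (cball x r) \<le> ennreal C"
    and ball_unif_pos: "\<exists>c::real. c > 0 \<and> (\<forall>x. emeasure M (cball x (1/2)) \<ge> ennreal c)"
    and T_bdd: "bounded_op M T"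
    and T_ctrl: "controlled M T"
    and xi_proper: "\<xi> \<noteq> bot"
    and xi_frechet: "\<And>A. A \<in> frechet_sets \<Longrightarrow> eventually (\<lambda>x. x \<in> A) \<xi>"
  shows "(INF F \<in> {F \<in> sets M. F \<in> co \<xi>}. opnorm M (mult_ind F T)) = 0
     \<longleftrightarrow> (\<forall>r>0. ((\<lambda>x. opnorm M (mult_ind (cball x r) T)) \<longlongrightarrow> 0) \<xi>)"
  using tendsto_opnorm_cball_of_INF_co_eq_0[OF sets_M T_bdd]
    INF_opnorm_co_eq_0_of_tendsto[OF sets_M T_bdd T_ctrl ball_unif_bdd ball_unif_pos]
  by blast

end
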